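(* Let $k$ be a positive integer and suppose $\mathbb{Q}^{\beth_\omega}$ is coloured with $k$ colours. Then there is an infinite set $X\subset\mathbb{Q}^{\beth_\omega}$ such that the sumset $X+X=\{x+y: x,y\in X\}$ is monochromatic.
   Context: $\beth_\omega=\sup\{\aleph_0,2^{\aleph_0},2^{2^{\aleph_0}},\dots\}$. $\mathbb{Q}^{\beth_\omega}$ denotes the rational vector space of dimension $\beth_\omega$ (the direct sum of $\beth_\omega$ copies of $\mathbb{Q}$). A $k$-colouring is an arbitrary function to a set of $k$ colours. Note that $X+X$ includes sums $x+x$ with $x\in X$. *)

theory Defs
  imports Complex_Main "HOL-Library.Poly_Mapping"
begin

unbundle cardinal_syntax

text \<open>beth n is |Pow^n(nat)|.  A set A has cardinality beth_omega = sup_n beth_n iff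
  it is the union of a sequence of sets S n with |S n| = beth n; i.e.
  |S 0| = |nat| and |S (n+1)| = |Pow (S n)|.\<close>

definition beth_omega_sized :: "'a set \<Rightarrow> bool" where
  "beth_omega_sized A \<longleftrightarrow>
     (\<exists>S :: nat \<Rightarrow> 'a set.
        card_of (S 0) =o card_of (UNIV :: nat set) \<and>
        (\<forall>n. card_of (S (Suc n)) =o card_of (Pow (S n))) \<and>
        A = (\<Union>n. S n))"

end

theory Submission
  imports Defs
begin

text \<open>Well-order the coordinates. For a finite set \<open>u\<close> of coordinates with \<open>k \<le> |u| \<le> 2k\<close> let
  \<open>w(u)\<close> be the vector that is 1 on the first \<open>2(|u| - k)\<close> elements of \<open>u\<close> and 2 on the remaining
  \<open>2k - |u|\<close> ones; the colouring \<open>c\<close> induces the colouring \<open>u \<mapsto> c(w(u))\<close> of the small finite sets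
  of coordinates. A canonical Erd\<ouml>s-Rado argument (induction on the subset size, passing to a long
  branch of the end-homogeneity tree, which costs one exponential per step) yields a set \<open>H\<close> of
  order type \<open>\<omega> + k\<close> on which this colour depends only on \<open>|u|\<close>. By pigeonhole, two sizes
  \<open>k + a < k + a'\<close> have the same colour. With \<open>m = a' - a\<close>, let \<open>x\<^sub>i\<close> be \<open>1/2\<close> on the first
  \<open>2a\<close> elements of \<open>H\<close>, 1 on the \<open>i\<close>-th block of \<open>m\<close> further elements of the \<open>\<omega>\<close>-part and 1 on
  \<open>k - a'\<close> elements of the top part. Then \<open>x\<^sub>i + x\<^sub>i = w(u)\<close> with \<open>|u| = k + a\<close>, and
  \<open>x\<^sub>i + x\<^sub>j = w(u)\<close> with \<open>|u| = k + a'\<close> for \<open>i \<noteq> j\<close>.\<close>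

lemma card_of_Times_ordLeq_infinite:
  "infinite M \<Longrightarrow> |A| \<le>o |M| \<Longrightarrow> |B| \<le>o |M| \<Longrightarrow> |A \<times> B| \<le>o |M|"
  using card_of_Times_ordLeq_infinite_Field[of "|M|" A B]
  by (simp add: Field_card_of card_of_Card_order card_of_card_order_on)

lemma card_of_Plus_ordLeq_infinite:
  "infinite M \<Longrightarrow> |A| \<le>o |M| \<Longrightarrow> |B| \<le>o |M| \<Longrightarrow> |A <+> B| \<le>o |M|"
  using card_of_Plus_ordLeq_infinite_Field[of "|M|" A B]
  by (simp add: Field_card_of card_of_Card_order card_of_card_order_on)

lemma card_of_Un_ordLeq_infinite:
  "infinite M \<Longrightarrow> |A| \<le>o |M| \<Longrightarrow> |B| \<le>o |M| \<Longrightarrow> |A \<union> B| \<le>o |M|"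
  using card_of_Un_ordLeq_infinite_Field[of "|M|" A B]
  by (simp add: Field_card_of card_of_Card_order card_of_card_order_on)

lemma card_of_Fpow_ordLeq_infinite:
  assumes "infinite M"
  shows "|Fpow M| \<le>o |M|"
proof -
  define F where "F j = {u. u \<subseteq> M \<and> finite u \<and> card u = j}" for j
  have F: "|F j| \<le>o |M|" for j
  proof (induction j)
    case 0
    have "F 0 = {{}}" unfolding F_def by auto
    then show ?case using assms card_of_singl_ordLeq by (metis finite.emptyI)
  next
    case (Suc j)
    have "F (Suc j) \<subseteq> (\<lambda>(u, m). insert m u) ` (F j \<times> M)"
    proof
      fix u assume "u \<in> F (Suc j)"
      then have u: "u \<subseteq> M" "finite u" "card u = Suc j" by (auto simp: F_def)
      then obtain m where m: "m \<in> u" by (metis card.empty ex_in_conv nat.distinct(1))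
      have "u - {m} \<in> F j" using u m by (auto simp: F_def)
      then show "u \<in> (\<lambda>(u, m). insert m u) ` (F j \<times> M)" using m u(1)
        by (intro image_eqI[where x = "(u - {m}, m)"]) auto
    qed
    then have "|F (Suc j)| \<le>o |F j \<times> M|" by (rule surj_imp_ordLeq)
    also have "|F j \<times> M| \<le>o |M|"
      using card_of_Times_ordLeq_infinite[OF assms Suc card_of_mono1[of M M]] by simp
    finally show ?case .
  qed
  then have "|\<Union>j\<in>(UNIV :: nat set). F j| \<le>o |M|"
    using card_of_UNION_ordLeq_infinite[OF assms] assms infinite_iff_card_of_nat by blast
  moreover have "Fpow M = (\<Union>j. F j)" by (auto simp: Fpow_def F_def)
  ultimately show ?thesis by simp
qed

lemma card_of_Pow_mono: "|A| \<le>o |B| \<Longrightarrow> |Pow A| \<le>o |Pow B|"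
proof -
  assume "|A| \<le>o |B|"
  then obtain g where g: "inj_on g A" "g ` A \<subseteq> B" using card_of_ordLeq by metis
  have "inj_on (image g) (Pow A)" using g(1) by (auto simp: inj_on_def inj_on_image_eq_iff)
  moreover have "image g ` Pow A \<subseteq> Pow B" using g(2) by auto
  ultimately show ?thesis using card_of_ordLeq by metis
qed

lemma card_of_Pow_Times_Pow: "|Pow A \<times> Pow B| \<le>o |Pow (A <+> B)|"
proof -
  have "inj_on (\<lambda>(P, Q). Inl ` P \<union> Inr ` Q) (Pow A \<times> Pow B)"
    by (auto simp: inj_on_def)
  moreover have "(\<lambda>(P, Q). Inl ` P \<union> Inr ` Q) ` (Pow A \<times> Pow B) \<subseteq> Pow (A <+> B)" by auto
  ultimately show ?thesis using card_of_ordLeq by metis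
qed

lemma card_of_Pow_Times_Pow_Fpow_ordLeq:
  assumes "infinite M"
  shows "|Pow (M \<times> M) \<times> Pow (Fpow M \<times> (UNIV :: nat set))| \<le>o |Pow M|"
proof -
  have M: "|M| \<le>o |M|" by (rule card_of_mono1) simp
  have "|M \<times> M| \<le>o |M|"
    using card_of_Times_ordLeq_infinite[OF assms M M] .
  moreover have "|Fpow M \<times> (UNIV :: nat set)| \<le>o |M|"
    using card_of_Times_ordLeq_infinite[OF assms card_of_Fpow_ordLeq_infinite[OF assms]]
      assms infinite_iff_card_of_nat by blast
  ultimately have "|(M \<times> M) <+> (Fpow M \<times> (UNIV :: nat set))| \<le>o |M|"
    using card_of_Plus_ordLeq_infinite[OF assms] by blast
  then show ?thesis
    using card_of_Pow_Times_Pow card_of_Pow_mono ordLeq_transitive by blast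
qed

definition beth_sequence :: "(nat \<Rightarrow> 'a set) \<Rightarrow> bool" where
  "beth_sequence S \<longleftrightarrow>
     card_of (S 0) =o card_of (UNIV :: nat set) \<and> (\<forall>n. card_of (S (Suc n)) =o card_of (Pow (S n)))"

lemma beth_sequence_ordLess_Suc: "beth_sequence S \<Longrightarrow> |S n| <o |S (Suc n)|"
  unfolding beth_sequence_def
  using ordLess_ordIso_trans[OF card_of_Pow ordIso_symmetric] by blast

lemma beth_sequence_infinite: "beth_sequence S \<Longrightarrow> infinite (S n)"
proof (induction n)
  case 0
  then show ?case using card_of_ordIso_finite by (fastforce simp: beth_sequence_def)
next
  case (Suc n)
  then show ?case
    using beth_sequence_ordLess_Suc ordLess_imp_ordLeq card_of_ordLeq_infinite by blast
qed

definition size_determined :: "nat \<Rightarrow> ('a set \<Rightarrow> 'b) \<Rightarrow> 'a set \<Rightarrow> bool" where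
  "size_determined n f H \<longleftrightarrow> (\<exists>C. \<forall>u\<subseteq>H. finite u \<and> card u \<le> n \<longrightarrow> f u = C (card u))"

lemma lookup_Abs_poly_mapping_finite_support:
  "finite A \<Longrightarrow> (\<And>z. z \<notin> A \<Longrightarrow> g z = 0) \<Longrightarrow> Poly_Mapping.lookup (Abs_poly_mapping g) = g"
  by (rule lookup_Abs_poly_mapping) (metis (mono_tags) finite_subset mem_Collect_eq subsetI)

definition half_one_vector :: "'a set \<Rightarrow> 'a set \<Rightarrow> 'a \<Rightarrow>\<^sub>0 rat" where
  "half_one_vector A B = Abs_poly_mapping (\<lambda>z. if z \<in> A then 1 / 2 else if z \<in> B then 1 else 0)"

lemma lookup_half_one_vector:
  "finite A \<Longrightarrow> finite B \<Longrightarrow>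
    Poly_Mapping.lookup (half_one_vector A B) z = (if z \<in> A then 1 / 2 else if z \<in> B then 1 else 0)"
  unfolding half_one_vector_def
  by (subst lookup_Abs_poly_mapping_finite_support[of "A \<union> B"]) auto

lemma pigeonhole_nat_pair:
  fixes g :: "nat \<Rightarrow> nat"
  assumes "\<And>a. a \<le> k \<Longrightarrow> g a < k"
  obtains a a' where "a < a'" "a' \<le> k" "g a = g a'"
proof -
  have "\<not> inj_on g {..k}"
  proof
    assume "inj_on g {..k}"
    moreover have "g ` {..k} \<subseteq> {..<k}" using assms by auto
    ultimately have "card {..k} \<le> card {..<k}" by (intro card_inj_on_le) auto
    then show False by simp
  qed
  then obtain a a' where "a \<le> k" "a' \<le> k" "a \<noteq> a'" "g a = g a'"
    unfolding inj_on_def by auto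
  then show ?thesis using that by (metis linorder_neqE_nat)
qed

locale well_order_UNIV =
  fixes r :: "'a rel"
  assumes well_order: "Well_order r" and Field_UNIV: "Field r = UNIV"
begin

definition prec :: "'a \<Rightarrow> 'a \<Rightarrow> bool" (infix "\<prec>" 50) where
  "a \<prec> b \<longleftrightarrow> (a, b) \<in> r \<and> a \<noteq> b"

lemma r_refl: "(a, a) \<in> r"
  using wo_rel.REFL[of r] well_order Field_UNIV unfolding wo_rel_def refl_on_def by auto

lemma prec_irrefl: "\<not> a \<prec> a"
  by (simp add: prec_def)

lemma prec_asym: "a \<prec> b \<Longrightarrow> \<not> b \<prec> a"
  using wo_rel.ANTISYM[of r] well_order unfolding wo_rel_def antisym_def prec_def by blast

lemma prec_trans: "a \<prec> b \<Longrightarrow> b \<prec> c \<Longrightarrow> a \<prec> c"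
  using wo_rel.TRANS[of r] well_order prec_asym unfolding wo_rel_def trans_def prec_def by blast

lemma prec_linear: "a \<noteq> b \<Longrightarrow> a \<prec> b \<or> b \<prec> a"
  using wo_rel.TOTALS[of r] well_order Field_UNIV unfolding wo_rel_def prec_def by auto

lemma not_prec: "\<not> a \<prec> b \<Longrightarrow> b = a \<or> b \<prec> a"
  using prec_linear by blast

lemma wf_prec: "wf {(a, b). a \<prec> b}"
proof -
  have "{(a, b). a \<prec> b} = r - Id" by (auto simp: prec_def)
  then show ?thesis using wo_rel.WF[of r] well_order unfolding wo_rel_def by simp
qed

lemma prec_induct: "(\<And>y. (\<And>z. z \<prec> y \<Longrightarrow> P z) \<Longrightarrow> P y) \<Longrightarrow> P x"
  using wf_induct[OF wf_prec, of P x] by blast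

lemma ex_prec_minimal:
  assumes "x \<in> A"
  shows "\<exists>a\<in>A. \<forall>b\<in>A. \<not> b \<prec> a"
proof -
  obtain a where "a \<in> A" "\<And>b. (b, a) \<in> {(a, b). a \<prec> b} \<Longrightarrow> b \<notin> A"
    by (rule wfE_min[OF wf_prec assms]) (rule that)
  then show ?thesis by blast
qed

lemma finite_ex_prec_maximum: "finite A \<Longrightarrow> A \<noteq> {} \<Longrightarrow> \<exists>a\<in>A. \<forall>b\<in>A. b \<noteq> a \<longrightarrow> b \<prec> a"
proof (induction A rule: finite_induct)
  case (insert x F)
  show ?case
  proof (cases "F = {}")
    case True
    then show ?thesis by auto
  next
    case False
    then obtain a where a: "a \<in> F" "\<forall>b\<in>F. b \<noteq> a \<longrightarrow> b \<prec> a" using insert by auto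
    show ?thesis
    proof (cases "x \<prec> a")
      case True
      then have "\<forall>b\<in>insert x F. b \<noteq> a \<longrightarrow> b \<prec> a" using a by blast
      then show ?thesis using a(1) by blast
    next
      case False
      then have "a \<prec> x" using insert(2) a(1) not_prec by blast
      have "b \<prec> x" if "b \<in> F" for b
        using a \<open>a \<prec> x\<close> that prec_trans by (cases "b = a") auto
      then have "\<forall>b\<in>insert x F. b \<noteq> x \<longrightarrow> b \<prec> x" by blast
      then show ?thesis by blast
    qed
  qed
qed simp

section \<open>The Erd\<ouml>s-Rado tree\<close>

text \<open>\<open>on_branch X f n x y\<close>: in the end-homogeneity tree of \<open>f\<close> on \<open>X\<close>, \<open>y\<close> lies below \<open>x\<close>
  on the branch of \<open>x\<close>, i.e. \<open>f\<close> cannot tell \<open>y\<close> from \<open>x\<close> on top of any \<open>n\<close> earlier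
  elements of that branch.\<close>

definition on_branch :: "'a set \<Rightarrow> ('a set \<Rightarrow> nat) \<Rightarrow> nat \<Rightarrow> 'a \<Rightarrow> 'a \<Rightarrow> bool" where
  "on_branch X f n x = wfrec {(a, b). a \<prec> b} (\<lambda>h y. y \<in> X \<and> y \<prec> x \<and>
     (\<forall>s. s \<subseteq> {z. z \<prec> y \<and> h z} \<and> finite s \<and> card s \<le> n \<longrightarrow> f (insert y s) = f (insert x s)))"

lemma on_branch_iff:
  "on_branch X f n x y \<longleftrightarrow> y \<in> X \<and> y \<prec> x \<and>
     (\<forall>s. s \<subseteq> {z. z \<prec> y \<and> on_branch X f n x z} \<and> finite s \<and> card s \<le> n
        \<longrightarrow> f (insert y s) = f (insert x s))"
proof -
  have "{z. z \<prec> y \<and> cut (on_branch X f n x) {(a, b). a \<prec> b} y z}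
      = {z. z \<prec> y \<and> on_branch X f n x z}"
    by (auto simp: cut_apply)
  then show ?thesis
    by (subst on_branch_def, subst wfrec[OF wf_prec]) (simp add: on_branch_def[symmetric])
qed

lemma on_branchD: "on_branch X f n x y \<Longrightarrow> y \<in> X \<and> y \<prec> x"
  using on_branch_iff by blast

lemma on_branch_on_branch:
  assumes "on_branch X f n x y" and "z \<prec> y"
  shows "on_branch X f n y z \<longleftrightarrow> on_branch X f n x z"
  using assms(2)
proof (induction z rule: prec_induct)
  case (1 z)
  have yx: "y \<prec> x" using on_branchD[OF assms(1)] by blast
  have same: "{w. w \<prec> z \<and> on_branch X f n y w} = {w. w \<prec> z \<and> on_branch X f n x w}"
    using 1 prec_trans by blast
  have "{w. w \<prec> z \<and> on_branch X f n x w} \<subseteq> {w. w \<prec> y \<and> on_branch X f n x w}"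
    using 1(2) prec_trans by blast
  then have "\<forall>s. s \<subseteq> {w. w \<prec> z \<and> on_branch X f n x w} \<and> finite s \<and> card s \<le> n
      \<longrightarrow> f (insert y s) = f (insert x s)"
    using assms(1) on_branch_iff by blast
  then show ?case
    by (subst on_branch_iff, subst (2) on_branch_iff) (use same 1(2) yx prec_trans in metis)
qed

lemma on_branch_determines:
  assumes "y \<in> X" "y' \<in> X" "{z. on_branch X f n y z} = {z. on_branch X f n y' z}"
    and "\<forall>s. s \<subseteq> {z. on_branch X f n y z} \<and> finite s \<and> card s \<le> n
      \<longrightarrow> f (insert y s) = f (insert y' s)"
  shows "y = y'"
proof -
  have earlier_on_branch: "on_branch X f n b a"
    if "a \<prec> b" "a \<in> X" "{z. on_branch X f n a z} = {z. on_branch X f n b z}"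
      and "\<forall>s. s \<subseteq> {z. on_branch X f n a z} \<and> finite s \<and> card s \<le> n
        \<longrightarrow> f (insert a s) = f (insert b s)" for a b
  proof -
    have "{z. z \<prec> a \<and> on_branch X f n b z} = {z. on_branch X f n a z}"
      using that(3) on_branchD by blast
    then show ?thesis using that by (subst on_branch_iff) auto
  qed
  show ?thesis
  proof (rule ccontr)
    assume "y \<noteq> y'"
    then consider "y \<prec> y'" | "y' \<prec> y" using prec_linear by blast
    then show False
    proof cases
      case 1
      then have "on_branch X f n y' y" using earlier_on_branch[of y y'] assms by blast
      then show False using assms(3) on_branchD prec_irrefl by blast
    next
      case 2
      then have "on_branch X f n y y'" using earlier_on_branch[of y' y] assms by auto
      then show False using assms(3) on_branchD prec_irrefl by blast
    qed
  qed
qed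

definition branch_to :: "'a set \<Rightarrow> ('a set \<Rightarrow> nat) \<Rightarrow> nat \<Rightarrow> 'a \<Rightarrow> 'a set" where
  "branch_to X f n x = insert x {y. on_branch X f n x y}"

lemma branch_to_subset: "x \<in> X \<Longrightarrow> branch_to X f n x \<subseteq> X"
  using on_branchD by (auto simp: branch_to_def)

lemma branch_to_below: "z \<in> branch_to X f n x \<Longrightarrow> z = x \<or> z \<prec> x"
  using on_branchD by (auto simp: branch_to_def)

lemma on_branch_in_branch_to:
  "y \<in> branch_to X f n x \<Longrightarrow> {z. on_branch X f n y z} = {z \<in> branch_to X f n x. z \<prec> y}"
  using on_branchD on_branch_on_branch prec_irrefl prec_asym
  unfolding branch_to_def by blast

lemma branch_to_iso_fixes:
  assumes "x \<in> X" "x' \<in> X"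
    and bij: "bij_betw \<phi> (branch_to X f n x) (branch_to X f n x')"
    and ord: "\<forall>a\<in>branch_to X f n x. \<forall>b\<in>branch_to X f n x. a \<prec> b \<longleftrightarrow> \<phi> a \<prec> \<phi> b"
    and val: "\<forall>s. s \<subseteq> branch_to X f n x \<longrightarrow> finite s \<longrightarrow> f (\<phi> ` s) = f s"
  shows "y \<in> branch_to X f n x \<Longrightarrow> \<phi> y = y"
proof (induction y rule: prec_induct)
  case (1 y)
  let ?D = "branch_to X f n x" and ?D' = "branch_to X f n x'"
  let ?B = "{w \<in> ?D. w \<prec> y}"
  have \<phi>y: "\<phi> y \<in> ?D'" using bij_betwE[OF bij] 1(2) by blast
  have fixes_B: "\<phi> w = w" if "w \<in> ?B" for w
    using 1 that by blast
  have "\<phi> ` ?B = {w \<in> ?D'. w \<prec> \<phi> y}"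
  proof
    show "\<phi> ` ?B \<subseteq> {w \<in> ?D'. w \<prec> \<phi> y}" using ord 1(2) bij_betwE[OF bij] by auto
    show "{w \<in> ?D'. w \<prec> \<phi> y} \<subseteq> \<phi> ` ?B"
    proof
      fix w assume w: "w \<in> {w \<in> ?D'. w \<prec> \<phi> y}"
      then have "w \<in> \<phi> ` ?D" using bij unfolding bij_betw_def by simp
      then obtain a where "a \<in> ?D" "\<phi> a = w" by blast
      then show "w \<in> \<phi> ` ?B" using ord 1(2) w by blast
    qed
  qed
  moreover have "\<phi> ` ?B = ?B"
    using fixes_B by (simp add: image_cong[of ?B ?B \<phi> "\<lambda>w. w"])
  ultimately have same_branch: "{z. on_branch X f n y z} = {z. on_branch X f n (\<phi> y) z}"
    using on_branch_in_branch_to[OF 1(2)] on_branch_in_branch_to[OF \<phi>y] by simp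
  have "f (insert y s) = f (insert (\<phi> y) s)"
    if "s \<subseteq> {z. on_branch X f n y z}" "finite s" for s
  proof -
    have sB: "s \<subseteq> ?B" using that(1) on_branch_in_branch_to[OF 1(2)] by blast
    then have "\<phi> ` insert y s = insert (\<phi> y) s"
      using fixes_B by (simp add: image_cong[of s s \<phi> "\<lambda>w. w"] subset_iff)
    moreover have "insert y s \<subseteq> ?D" using sB 1(2) by blast
    ultimately show ?thesis using val that(2) by (metis finite_insert)
  qed
  moreover have "y \<in> X" "\<phi> y \<in> X"
    using branch_to_subset[OF \<open>x \<in> X\<close>] branch_to_subset[OF \<open>x' \<in> X\<close>] 1(2) \<phi>y by blast+
  ultimately show "\<phi> y = y"
    using on_branch_determines[OF _ _ same_branch] by (metis (no_types, lifting))
qed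

lemma branch_to_rigid:
  assumes "x \<in> X" "x' \<in> X"
    and bij: "bij_betw \<phi> (branch_to X f n x) (branch_to X f n x')"
    and ord: "\<forall>a\<in>branch_to X f n x. \<forall>b\<in>branch_to X f n x. a \<prec> b \<longleftrightarrow> \<phi> a \<prec> \<phi> b"
    and val: "\<forall>s. s \<subseteq> branch_to X f n x \<longrightarrow> finite s \<longrightarrow> f (\<phi> ` s) = f s"
  shows "x = x'"
proof -
  have x: "x \<in> branch_to X f n x" and x': "x' \<in> branch_to X f n x'"
    by (simp_all add: branch_to_def)
  have "\<phi> x = x'"
  proof (rule ccontr)
    assume "\<phi> x \<noteq> x'"
    then have "\<phi> x \<prec> x'" using branch_to_below bij_betwE[OF bij] x by blast
    moreover obtain a where a: "a \<in> branch_to X f n x" "\<phi> a = x'"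
      using bij x' unfolding bij_betw_def by (metis imageE)
    ultimately have "x \<prec> a" using ord x by blast
    then show False using branch_to_below[OF a(1)] prec_asym prec_irrefl by blast
  qed
  then show ?thesis using branch_to_iso_fixes[OF assms x] by simp
qed

definition order_code :: "('a \<Rightarrow> 'm) \<Rightarrow> 'a set \<Rightarrow> ('a set \<Rightarrow> nat)
    \<Rightarrow> ('m \<times> 'm) set \<times> ('m set \<times> nat) set" where
  "order_code e D f = ({(e a, e b) | a b. a \<in> D \<and> b \<in> D \<and> (a, b) \<in> r},
                       {(e ` s, f s) | s. s \<subseteq> D \<and> finite s})"

lemma order_code_in:
  "e ` D \<subseteq> M \<Longrightarrow> order_code e D f \<in> Pow (M \<times> M) \<times> Pow (Fpow M \<times> UNIV)"
  unfolding order_code_def Fpow_def by blast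

lemma order_code_relation_iff:
  "inj_on e D \<Longrightarrow> a \<in> D \<Longrightarrow> b \<in> D \<Longrightarrow> (e a, e b) \<in> fst (order_code e D f) \<longleftrightarrow> (a, b) \<in> r"
  by (auto simp: order_code_def dest: inj_onD)

lemma image_eq_order_code_diagonal:
  "inj_on e D \<Longrightarrow> e ` D = {m. (m, m) \<in> fst (order_code e D f)}"
  using r_refl by (auto simp: order_code_def dest: inj_onD)

lemma order_code_eq_imp_iso:
  assumes inj: "inj_on e D" and inj': "inj_on e' D'"
    and code: "order_code e D f = order_code e' D' f"
  obtains \<phi> where "bij_betw \<phi> D D'" "\<forall>a\<in>D. \<forall>b\<in>D. a \<prec> b \<longleftrightarrow> \<phi> a \<prec> \<phi> b"
    "\<forall>s. s \<subseteq> D \<longrightarrow> finite s \<longrightarrow> f (\<phi> ` s) = f s"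
proof
  have images: "e ` D = e' ` D'"
    using image_eq_order_code_diagonal[OF inj, of f] image_eq_order_code_diagonal[OF inj', of f] code
    by simp
  define \<phi> where "\<phi> = inv_into D' e' \<circ> e"
  have e'\<phi>: "\<phi> a \<in> D' \<and> e' (\<phi> a) = e a" if "a \<in> D" for a
    unfolding \<phi>_def using images that by (metis comp_apply f_inv_into_f image_eqI inv_into_into)
  show bij: "bij_betw \<phi> D D'"
  proof -
    have "bij_betw (inv_into D' e') (e ` D) D'"
      using bij_betw_inv_into[OF inj_on_imp_bij_betw[OF inj']] images by simp
    then show ?thesis unfolding \<phi>_def by (rule bij_betw_trans[OF inj_on_imp_bij_betw[OF inj]])
  qed
  show "\<forall>a\<in>D. \<forall>b\<in>D. a \<prec> b \<longleftrightarrow> \<phi> a \<prec> \<phi> b"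
  proof (intro ballI)
    fix a b assume ab: "a \<in> D" "b \<in> D"
    have "(a, b) \<in> r \<longleftrightarrow> (e' (\<phi> a), e' (\<phi> b)) \<in> fst (order_code e' D' f)"
      using order_code_relation_iff[OF inj ab, of f] code e'\<phi> ab by simp
    also have "\<dots> \<longleftrightarrow> (\<phi> a, \<phi> b) \<in> r"
      using order_code_relation_iff[OF inj', of _ _ f] e'\<phi> ab by blast
    finally show "a \<prec> b \<longleftrightarrow> \<phi> a \<prec> \<phi> b"
      using inj_on_eq_iff[OF bij_betw_imp_inj_on[OF bij] ab] unfolding prec_def by simp
  qed
  show "\<forall>s. s \<subseteq> D \<longrightarrow> finite s \<longrightarrow> f (\<phi> ` s) = f s"
  proof (intro allI impI)
    fix s assume s: "s \<subseteq> D" "finite s"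
    then have "(e ` s, f s) \<in> snd (order_code e' D' f)"
      unfolding code[symmetric] by (auto simp: order_code_def)
    then obtain s' where s': "s' \<subseteq> D'" "e ` s = e' ` s'" "f s = f s'"
      by (auto simp: order_code_def)
    have "e' ` (\<phi> ` s) = e ` s"
      unfolding image_image using e'\<phi> s(1) by (intro image_cong) auto
    moreover have "\<phi> ` s \<subseteq> D'" using e'\<phi> s(1) by blast
    ultimately have "s' = \<phi> ` s" using inj_on_image_eq_iff[OF inj' s'(1)] s'(2) by metis
    then show "f (\<phi> ` s) = f s" using s' by simp
  qed
qed

text \<open>By \<open>branch_to_rigid\<close>, \<open>x\<close> is determined by the isomorphism type of its branch with
  the values of \<open>f\<close>, and copied into \<open>M\<close> these data take at most \<open>2^|M|\<close> values.\<close>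

lemma card_le_Pow_if_branches_small:
  assumes "infinite M" and small: "\<forall>x\<in>X. |{y. on_branch X f n x y}| \<le>o |M|"
  shows "|X| \<le>o |Pow M|"
proof -
  have "M \<noteq> {}" using assms(1) by auto
  have "\<exists>g. inj_on g (branch_to X f n x) \<and> g ` branch_to X f n x \<subseteq> M" if "x \<in> X" for x
  proof -
    have "|{x} \<union> {y. on_branch X f n x y}| \<le>o |M|"
      by (rule card_of_Un_ordLeq_infinite[OF assms(1) card_of_singl_ordLeq[OF \<open>M \<noteq> {}\<close>]])
        (use small that in blast)
    then have "|branch_to X f n x| \<le>o |M|" by (simp add: branch_to_def)
    then show ?thesis by (rule card_of_ordLeq[THEN iffD2])
  qed
  then obtain e
    where e: "\<And>x. x \<in> X \<Longrightarrow> inj_on (e x) (branch_to X f n x) \<and> e x ` branch_to X f n x \<subseteq> M"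
    by metis
  define code where "code x = order_code (e x) (branch_to X f n x) f" for x
  have "inj_on code X"
  proof (rule inj_onI)
    fix x x' assume x: "x \<in> X" and x': "x' \<in> X" and "code x = code x'"
    then have "order_code (e x) (branch_to X f n x) f = order_code (e x') (branch_to X f n x') f"
      by (simp add: code_def)
    then obtain \<phi> where "bij_betw \<phi> (branch_to X f n x) (branch_to X f n x')"
      "\<forall>a\<in>branch_to X f n x. \<forall>b\<in>branch_to X f n x. a \<prec> b \<longleftrightarrow> \<phi> a \<prec> \<phi> b"
      "\<forall>s. s \<subseteq> branch_to X f n x \<longrightarrow> finite s \<longrightarrow> f (\<phi> ` s) = f s"
      by (rule order_code_eq_imp_iso[OF conjunct1[OF e[OF x]] conjunct1[OF e[OF x']]])
    then show "x = x'" by (rule branch_to_rigid[OF x x'])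
  qed
  moreover have "code ` X \<subseteq> Pow (M \<times> M) \<times> Pow (Fpow M \<times> UNIV)"
    unfolding code_def by (intro image_subsetI order_code_in conjunct2[OF e])
  ultimately have "|X| \<le>o |Pow (M \<times> M) \<times> Pow (Fpow M \<times> (UNIV :: nat set))|"
    unfolding card_of_ordLeq[symmetric] by blast
  then show ?thesis
    using ordLeq_transitive card_of_Pow_Times_Pow_Fpow_ordLeq[OF assms(1)] by blast
qed

section \<open>Canonical colourings on sets of type \<open>\<omega> + L\<close>\<close>

definition has_order_type_omega_plus :: "nat \<Rightarrow> 'a set \<Rightarrow> bool" where
  "has_order_type_omega_plus L H \<longleftrightarrow> (\<exists>(s :: nat \<Rightarrow> 'a) T. (\<forall>i j. i < j \<longrightarrow> s i \<prec> s j) \<and>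
     finite T \<and> card T = L \<and> (\<forall>i. \<forall>t\<in>T. s i \<prec> t) \<and> H = range s \<union> T)"

lemma size_determined_Suc_on_branch:
  assumes branch: "H \<subseteq> {y. on_branch X f n x y}"
    and "size_determined n (\<lambda>u. f (insert x u)) H"
  shows "size_determined (Suc n) f H"
proof -
  obtain C where C: "\<forall>u\<subseteq>H. finite u \<and> card u \<le> n \<longrightarrow> f (insert x u) = C (card u)"
    using assms(2) by (auto simp: size_determined_def)
  have "f u = (if card u = 0 then f {} else C (card u - 1))"
    if u: "u \<subseteq> H" "finite u" "card u \<le> Suc n" for u
  proof (cases "u = {}")
    case False
    then obtain y where y: "y \<in> u" "\<forall>b\<in>u. b \<noteq> y \<longrightarrow> b \<prec> y"
      using finite_ex_prec_maximum u(2) by blast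
    define s where "s = u - {y}"
    have u_eq: "u = insert y s" and card_s: "card s = card u - 1"
      using y(1) u(2) by (auto simp: s_def)
    have "on_branch X f n x y" using y(1) u(1) branch by blast
    moreover have "s \<subseteq> {z. z \<prec> y \<and> on_branch X f n x z}" "finite s" "card s \<le> n"
      using y u branch card_s by (auto simp: s_def)
    ultimately have "f (insert y s) = f (insert x s)" using on_branch_iff by blast
    also have "\<dots> = C (card s)"
      using C \<open>finite s\<close> \<open>card s \<le> n\<close> u(1) unfolding s_def by blast
    finally show ?thesis using u_eq card_s False u(2) by simp
  qed simp
  then show ?thesis
    unfolding size_determined_def
    by (intro exI[of _ "\<lambda>j. if j = 0 then f {} else C (j - 1)"] allI impI) auto
qed

lemma uncountable_infinitely_many_infinite_prefixes:
  assumes "|UNIV :: nat set| <o |X|"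
  shows "infinite {x \<in> X. infinite {y \<in> X. y \<prec> x}}"
proof
  define P where "P x = {y \<in> X. y \<prec> x}" for x
  define C where "C = {x \<in> X. infinite (P x)}"
  assume "finite (C :: 'a set)"
  have "card (P a) < card (P b)" if "a \<in> X - C" "b \<in> X - C" "a \<prec> b" for a b
  proof (rule psubset_card_mono)
    show "finite (P b)" using that(2) by (simp add: C_def)
    have "P a \<subseteq> P b" using that(3) prec_trans by (auto simp: P_def)
    moreover have "a \<in> P b - P a" using that prec_irrefl by (simp add: P_def)
    ultimately show "P a \<subset> P b" by blast
  qed
  then have "inj_on (\<lambda>x. card (P x)) (X - C)"
    by (intro inj_onI) (metis prec_linear less_irrefl)
  then have "|X - C| \<le>o |UNIV :: nat set|" using card_of_ordLeq by blast
  moreover have "|C| \<le>o |UNIV :: nat set|"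
    using \<open>finite C\<close> finite_iff_ordLess_natLeq card_of_nat ordLess_imp_ordLeq ordLess_ordIso_trans
    by (metis card_of_ordLeq finite_imp_inj_to_nat_seg subset_UNIV)
  ultimately have "|(X - C) \<union> C| \<le>o |UNIV :: nat set|"
    by (rule card_of_Un_ordLeq_infinite[OF infinite_UNIV_nat])
  moreover have "(X - C) \<union> C = X" by (auto simp: C_def)
  ultimately show False using assms not_ordLess_ordLeq by metis
qed

lemma increasing_seq_if_finite_prefixes:
  assumes "infinite I" and finite_prefixes: "\<forall>y\<in>I. finite {z \<in> I. z \<prec> y}"
  obtains s :: "nat \<Rightarrow> 'a" where "range s \<subseteq> I" "\<forall>i j. i < j \<longrightarrow> s i \<prec> s j"
proof -
  have up: "\<exists>a. a \<in> I \<and> p \<prec> a" if "p \<in> I" for p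
  proof (rule ccontr)
    assume "\<nexists>a. a \<in> I \<and> p \<prec> a"
    then have "I \<subseteq> insert p {z \<in> I. z \<prec> p}" using not_prec by blast
    then show False using assms finite_prefixes that by (meson finite_insert finite_subset)
  qed
  obtain a0 where a0: "a0 \<in> I" using assms(1) by (metis finite.emptyI ex_in_conv)
  define s where "s = rec_nat a0 (\<lambda>_ p. SOME a. a \<in> I \<and> p \<prec> a)"
  have sI: "s i \<in> I" for i
    by (induction i) (simp_all add: s_def a0 someI_ex[OF up])
  have step: "s i \<prec> s (Suc i)" for i
    using someI_ex[OF up[OF sI[of i]]] by (simp add: s_def)
  have increasing: "s i \<prec> s j" if "i < j" for i j
    using that
  proof (induction j)
    case (Suc j)
    then show ?case using step prec_trans less_Suc_eq by metis
  qed simp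
  show ?thesis
  proof (rule that)
    show "range s \<subseteq> I" using sI by blast
    show "\<forall>i j. i < j \<longrightarrow> s i \<prec> s j" using increasing by blast
  qed
qed

lemma uncountable_has_omega_plus_subset:
  assumes "|UNIV :: nat set| <o |X|"
  shows "\<exists>H\<subseteq>X. has_order_type_omega_plus L H"
proof -
  define P where "P x = {y \<in> X. y \<prec> x}" for x
  define C where "C = {x \<in> X. infinite (P x)}"
  have "infinite C"
    using uncountable_infinitely_many_infinite_prefixes[OF assms] by (simp add: C_def P_def)
  then obtain c where c: "c \<in> C" "\<forall>b\<in>C. \<not> b \<prec> c"
    using ex_prec_minimal by (metis finite.emptyI ex_in_conv)
  obtain T where T: "finite T" "card T = L" "T \<subseteq> C"
    using infinite_arbitrarily_large[OF \<open>infinite C\<close>] by blast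
  \<comment> \<open>\<open>c\<close> is the first element with infinitely many predecessors: an \<open>\<omega>\<close>-sequence below \<open>c\<close>
      followed by \<open>T\<close> has type \<open>\<omega> + L\<close>.\<close>
  have "\<forall>y\<in>P c. finite {z \<in> P c. z \<prec> y}"
  proof
    fix y assume "y \<in> P c"
    have "y \<notin> C" using c(2) \<open>y \<in> P c\<close> by (auto simp: P_def)
    then have "finite (P y)" using \<open>y \<in> P c\<close> by (simp add: C_def P_def)
    then show "finite {z \<in> P c. z \<prec> y}" by (rule finite_subset[rotated]) (auto simp: P_def)
  qed
  moreover have "infinite (P c)" using c(1) by (simp add: C_def)
  ultimately obtain s :: "nat \<Rightarrow> 'a" where s: "range s \<subseteq> P c" "\<forall>i j. i < j \<longrightarrow> s i \<prec> s j"
    by (metis increasing_seq_if_finite_prefixes)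
  have "s i \<prec> t" if "t \<in> T" for i t
  proof -
    have "s i \<prec> c" using s(1) by (auto simp: P_def)
    moreover have "t = c \<or> c \<prec> t" using c T(3) that not_prec by blast
    ultimately show ?thesis using prec_trans by blast
  qed
  then have "has_order_type_omega_plus L (range s \<union> T)"
    unfolding has_order_type_omega_plus_def using s(2) T(1,2) by blast
  moreover have "range s \<union> T \<subseteq> X" using s(1) T(3) by (auto simp: P_def C_def)
  ultimately show ?thesis by blast
qed

theorem erdos_rado_size_determined:
  fixes f :: "'a set \<Rightarrow> nat"
  assumes "beth_sequence S" and "|S n| <o |X|"
  shows "\<exists>H\<subseteq>X. has_order_type_omega_plus L H \<and> size_determined n f H"
  using assms(2)
proof (induction n arbitrary: X f)
  case 0
  have "|S 0| =o |UNIV :: nat set|" using assms(1) by (simp add: beth_sequence_def)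
  then have "|UNIV :: nat set| <o |X|" using ordIso_ordLess_trans[OF ordIso_symmetric] 0 by blast
  then obtain H where "H \<subseteq> X" "has_order_type_omega_plus L H"
    using uncountable_has_omega_plus_subset by blast
  moreover have "size_determined 0 f H"
    unfolding size_determined_def by (rule exI[of _ "\<lambda>_. f {}"]) auto
  ultimately show ?case by blast
next
  case (Suc n)
  \<comment> \<open>Some branch has more than \<open>\<beth>\<^sub>n\<close> elements, otherwise \<open>|X| \<le> 2^\<beth>\<^sub>n\<close>.\<close>
  have "\<exists>x\<in>X. \<not> |{y. on_branch X f n x y}| \<le>o |S n|"
  proof (rule ccontr)
    assume "\<not> ?thesis"
    then have "|X| \<le>o |Pow (S n)|"
      using card_le_Pow_if_branches_small[OF beth_sequence_infinite[OF assms(1)]] by blast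
    moreover have "|Pow (S n)| =o |S (Suc n)|"
      using assms(1) unfolding beth_sequence_def by (blast intro: ordIso_symmetric)
    ultimately show False
      using Suc.prems ordLeq_ordIso_trans not_ordLess_ordLeq by blast
  qed
  then obtain x where x: "x \<in> X" and "\<not> |{y. on_branch X f n x y}| \<le>o |S n|" by blast
  then have "|S n| <o |{y. on_branch X f n x y}|"
    using not_ordLeq_iff_ordLess[OF card_of_Well_order card_of_Well_order] by blast
  then obtain H where H: "H \<subseteq> {y. on_branch X f n x y}" "has_order_type_omega_plus L H"
    and "size_determined n (\<lambda>u. f (insert x u)) H"
    using Suc.IH by blast
  then have "size_determined (Suc n) f H" using size_determined_Suc_on_branch by blast
  moreover have "H \<subseteq> X" using H(1) on_branchD by blast
  ultimately show ?case using H(2) by blast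
qed

section \<open>Sums of weight vectors\<close>

definition weight_vector :: "nat \<Rightarrow> 'a set \<Rightarrow> 'a \<Rightarrow>\<^sub>0 rat" where
  "weight_vector k u = Abs_poly_mapping (\<lambda>z.
     if z \<in> u then if card {w \<in> u. w \<prec> z} < 2 * (card u - k) then 1 else 2 else 0)"

lemma lookup_weight_vector_split:
  assumes "finite P" "finite Q" and below: "\<forall>p\<in>P. \<forall>q\<in>Q. p \<prec> q"
    and card_P: "card P = 2 * (card (P \<union> Q) - k)"
  shows "Poly_Mapping.lookup (weight_vector k (P \<union> Q)) z = (if z \<in> P then 1 else if z \<in> Q then 2 else 0)"
proof -
  have lookup: "Poly_Mapping.lookup (weight_vector k (P \<union> Q)) z = (if z \<in> P \<union> Q then
      if card {w \<in> P \<union> Q. w \<prec> z} < 2 * (card (P \<union> Q) - k) then 1 else 2 else 0)"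
    unfolding weight_vector_def
    by (subst lookup_Abs_poly_mapping_finite_support[of "P \<union> Q"]) (use assms in auto)
  consider "z \<in> P" | "z \<in> Q" "z \<notin> P" | "z \<notin> P \<union> Q" by blast
  then show ?thesis
  proof cases
    case 1
    have "{w \<in> P \<union> Q. w \<prec> z} \<subseteq> P - {z}" using 1 below prec_asym prec_irrefl by blast
    then have "card {w \<in> P \<union> Q. w \<prec> z} < card P"
      using \<open>finite P\<close> 1 by (meson card_Diff1_less card_mono finite_Diff le_less_trans)
    then show ?thesis using 1 card_P lookup by simp
  next
    case 2
    have "P \<subseteq> {w \<in> P \<union> Q. w \<prec> z}" using 2 below by blast
    then have "card P \<le> card {w \<in> P \<union> Q. w \<prec> z}" using assms(1,2) by (intro card_mono) auto
    then show ?thesis using 2 card_P lookup by simp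
  next
    case 3
    then show ?thesis using lookup by simp
  qed
qed

lemma half_one_vector_double:
  assumes "finite A" "finite B" "\<forall>p\<in>A. \<forall>q\<in>B. p \<prec> q" "card A = 2 * (card (A \<union> B) - k)"
  shows "half_one_vector A B + half_one_vector A B = weight_vector k (A \<union> B)"
proof (rule poly_mapping_eqI)
  fix z
  show "Poly_Mapping.lookup (half_one_vector A B + half_one_vector A B) z
      = Poly_Mapping.lookup (weight_vector k (A \<union> B)) z"
    using assms by (simp add: lookup_add lookup_half_one_vector lookup_weight_vector_split)
qed

lemma half_one_vector_add_disjoint:
  assumes "finite A" "finite B" "finite B'" "finite R"
    and "A \<inter> B = {}" "A \<inter> B' = {}" "B \<inter> B' = {}"
    and below: "\<forall>p\<in>A \<union> B \<union> B'. \<forall>q\<in>R. p \<prec> q"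
    and "card (A \<union> B \<union> B') = 2 * (card (A \<union> B \<union> B' \<union> R) - k)"
  shows "half_one_vector A (B \<union> R) + half_one_vector A (B' \<union> R) = weight_vector k (A \<union> B \<union> B' \<union> R)"
proof (rule poly_mapping_eqI)
  fix z
  have "z \<notin> R" if "z \<in> A \<union> B \<union> B'" using below that prec_irrefl by blast
  then show "Poly_Mapping.lookup (half_one_vector A (B \<union> R) + half_one_vector A (B' \<union> R)) z
      = Poly_Mapping.lookup (weight_vector k (A \<union> B \<union> B' \<union> R)) z"
    using assms by (auto simp: lookup_add lookup_half_one_vector lookup_weight_vector_split)
qed

text \<open>The vectors \<open>x\<^sub>i\<close> of the proof idea, with \<open>A\<close> the first \<open>2a\<close> terms of \<open>s\<close> and \<open>B i\<close>
  the \<open>i\<close>-th block of \<open>m\<close> further terms.\<close>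

lemma sums_of_block_vectors:
  fixes s :: "nat \<Rightarrow> 'a"
  assumes s: "\<forall>i j. i < j \<longrightarrow> s i \<prec> s j" and "finite R" and R: "\<forall>i. \<forall>t\<in>R. s i \<prec> t"
    and "0 < m" and k: "k = a + m + card R"
  obtains x :: "nat \<Rightarrow> 'a \<Rightarrow>\<^sub>0 rat" where "inj x"
    and "\<And>i. \<exists>u \<subseteq> range s \<union> R. finite u \<and> card u = k + a \<and> x i + x i = weight_vector k u"
    and "\<And>i j. i \<noteq> j \<Longrightarrow>
      \<exists>u \<subseteq> range s \<union> R. finite u \<and> card u = k + a + m \<and> x i + x j = weight_vector k u"
proof -
  define A where "A = s ` {..<2 * a}"
  define B where "B i = s ` {2 * a + i * m ..< 2 * a + i * m + m}" for i
  have "inj s"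
    by (rule injI) (metis s prec_irrefl linorder_neqE_nat)
  then have card_A: "card A = 2 * a" and card_B: "card (B i) = m" for i
    by (simp_all add: A_def B_def card_image inj_on_subset)
  have fin: "finite A" "finite (B i)" for i by (simp_all add: A_def B_def)
  have B_disjoint: "B i \<inter> B j = {}" if "i \<noteq> j" for i j
  proof -
    have "{2 * a + i * m ..< 2 * a + i * m + m} \<inter> {2 * a + j * m ..< 2 * a + j * m + m} = {}"
      if "i < j" for i j
    proof -
      have "i * m + m \<le> j * m" using that mult_le_mono1[of "Suc i" j m] by simp
      then show ?thesis by auto
    qed
    then show ?thesis
      using that \<open>inj s\<close> unfolding B_def
      by (metis image_Int inj_on_subset subset_UNIV image_empty inf_commute linorder_neqE_nat)
  qed
  have A_below_B: "\<forall>p\<in>A. \<forall>q\<in>B i. p \<prec> q" for i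
    using s by (fastforce simp: A_def B_def)
  have AB_range: "A \<subseteq> range s" "B i \<subseteq> range s" for i by (auto simp: A_def B_def)
  then have s_below_R: "\<forall>p\<in>A \<union> B i \<union> B j. \<forall>q\<in>R. p \<prec> q" for i j using R by blast
  have disjoint: "A \<inter> B i = {}" "A \<inter> R = {}" "B i \<inter> R = {}" for i
    using A_below_B s_below_R prec_irrefl by blast+
  define x where "x i = half_one_vector A (B i \<union> R)" for i
  show ?thesis
  proof
    show "inj x"
    proof (rule injI)
      fix i j assume "x i = x j"
      let ?z = "s (2 * a + i * m)"
      have z: "?z \<in> B i" using \<open>0 < m\<close> by (simp add: B_def)
      show "i = j"
      proof (rule ccontr)
        assume "i \<noteq> j"
        then have "?z \<notin> A" "?z \<notin> B j" "?z \<notin> R" using z disjoint B_disjoint by blast+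
        then have "Poly_Mapping.lookup (x j) ?z = 0" "Poly_Mapping.lookup (x i) ?z = 1"
          using z fin \<open>finite R\<close> by (simp_all add: x_def lookup_half_one_vector)
        then show False using \<open>x i = x j\<close> by simp
      qed
    qed
  next
    fix i :: nat
    have "card (A \<union> (B i \<union> R)) = k + a"
      using disjoint fin \<open>finite R\<close> card_A card_B k by (simp add: card_Un_disjoint Int_Un_distrib)
    then have "x i + x i = weight_vector k (A \<union> (B i \<union> R))"
      unfolding x_def using fin \<open>finite R\<close> A_below_B s_below_R card_A
      by (intro half_one_vector_double) auto
    moreover have "A \<union> (B i \<union> R) \<subseteq> range s \<union> R" using AB_range by blast
    ultimately show "\<exists>u \<subseteq> range s \<union> R. finite u \<and> card u = k + a \<and> x i + x i = weight_vector k u"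
      using fin \<open>finite R\<close> \<open>card (A \<union> (B i \<union> R)) = k + a\<close> by blast
  next
    fix i j :: nat assume "i \<noteq> j"
    have "card (A \<union> B i \<union> B j) = 2 * a + 2 * m"
      using disjoint B_disjoint[OF \<open>i \<noteq> j\<close>] fin card_A card_B
      by (simp add: card_Un_disjoint Int_Un_distrib2)
    moreover have card_u: "card (A \<union> B i \<union> B j \<union> R) = k + a + m"
      using calculation disjoint fin \<open>finite R\<close> k by (simp add: card_Un_disjoint Int_Un_distrib2)
    ultimately have "x i + x j = weight_vector k (A \<union> B i \<union> B j \<union> R)"
      unfolding x_def using fin \<open>finite R\<close> disjoint B_disjoint[OF \<open>i \<noteq> j\<close>] s_below_R
      by (intro half_one_vector_add_disjoint) auto
    moreover have "A \<union> B i \<union> B j \<union> R \<subseteq> range s \<union> R" using AB_range by blast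
    ultimately show "\<exists>u \<subseteq> range s \<union> R. finite u \<and> card u = k + a + m \<and> x i + x j = weight_vector k u"
      using fin \<open>finite R\<close> card_u by blast
  qed
qed

lemma omega_plus_two_sizes_same_colour:
  fixes c :: "('a \<Rightarrow>\<^sub>0 rat) \<Rightarrow> nat"
  assumes H: "has_order_type_omega_plus k H" and colours: "\<forall>v. c v < k"
    and "size_determined (2 * k) (\<lambda>u. c (weight_vector k u)) H"
  obtains a a' col where "a < a'" "a' \<le> k"
    "\<And>u. u \<subseteq> H \<Longrightarrow> finite u \<Longrightarrow> card u = k + a \<or> card u = k + a' \<Longrightarrow> c (weight_vector k u) = col"
proof -
  obtain C where C: "\<And>u. u \<subseteq> H \<Longrightarrow> finite u \<Longrightarrow> card u \<le> 2 * k \<Longrightarrow> c (weight_vector k u) = C (card u)"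
    using assms(3) unfolding size_determined_def by blast
  obtain s :: "nat \<Rightarrow> 'a" where s: "\<forall>i j. i < j \<longrightarrow> s i \<prec> s j" and "range s \<subseteq> H"
    using H unfolding has_order_type_omega_plus_def by blast
  have "inj s" by (rule injI) (metis s prec_irrefl linorder_neqE_nat)
  have "C (k + a) < k" if "a \<le> k" for a
  proof -
    have "card (s ` {..<k + a}) = k + a" using \<open>inj s\<close> by (simp add: card_image inj_on_subset)
    then have "c (weight_vector k (s ` {..<k + a})) = C (k + a)"
      using C[of "s ` {..<k + a}"] that \<open>range s \<subseteq> H\<close> by auto
    then show ?thesis using colours by metis
  qed
  then obtain a a' where a: "a < a'" "a' \<le> k" "C (k + a) = C (k + a')"
    using pigeonhole_nat_pair[of k "\<lambda>a. C (k + a)"] by blast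
  show ?thesis
  proof (rule that[OF a(1,2)])
    fix u assume "u \<subseteq> H" "finite u" "card u = k + a \<or> card u = k + a'"
    then show "c (weight_vector k u) = C (k + a)" using C[of u] a by auto
  qed
qed

lemma monochromatic_sumset_if_size_determined:
  fixes c :: "('a \<Rightarrow>\<^sub>0 rat) \<Rightarrow> nat"
  assumes "has_order_type_omega_plus k H" and "\<forall>v. c v < k"
    and "size_determined (2 * k) (\<lambda>u. c (weight_vector k u)) H"
  shows "\<exists>X. infinite X \<and> (\<exists>col. \<forall>x\<in>X. \<forall>y\<in>X. c (x + y) = col)"
proof -
  obtain a a' col where a: "a < a'" "a' \<le> k" and col:
    "\<And>u. u \<subseteq> H \<Longrightarrow> finite u \<Longrightarrow> card u = k + a \<or> card u = k + a' \<Longrightarrow> c (weight_vector k u) = col"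
    using omega_plus_two_sizes_same_colour[OF assms] by blast
  obtain s :: "nat \<Rightarrow> 'a" and T where s: "\<forall>i j. i < j \<longrightarrow> s i \<prec> s j"
    and T: "finite T" "card T = k" "\<forall>i. \<forall>t\<in>T. s i \<prec> t" and H: "H = range s \<union> T"
    using assms(1) unfolding has_order_type_omega_plus_def by blast
  obtain R where R: "R \<subseteq> T" "card R = k - a'" "finite R"
    using obtain_subset_with_card_n[of "k - a'" T] T(1,2) by (metis diff_le_self finite_subset)
  obtain x :: "nat \<Rightarrow> 'a \<Rightarrow>\<^sub>0 rat" where "inj x"
    and same: "\<And>i. \<exists>u \<subseteq> range s \<union> R. finite u \<and> card u = k + a \<and> x i + x i = weight_vector k u"
    and different: "\<And>i j. i \<noteq> j \<Longrightarrow>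
      \<exists>u \<subseteq> range s \<union> R. finite u \<and> card u = k + a + (a' - a) \<and> x i + x j = weight_vector k u"
  proof (rule sums_of_block_vectors[OF s R(3)])
    show "\<forall>i. \<forall>t\<in>R. s i \<prec> t" using T(3) R(1) by blast
    show "0 < a' - a" "k = a + (a' - a) + card R" using a R(2) by simp_all
  qed (rule that)
  have "c (x i + x j) = col" for i j
  proof -
    have "\<exists>u \<subseteq> range s \<union> R. finite u \<and> (card u = k + a \<or> card u = k + a') \<and>
        x i + x j = weight_vector k u"
      using same[of i] different[of i j] a(1) by (cases "i = j") auto
    then obtain u where u: "u \<subseteq> range s \<union> R" "finite u" "card u = k + a \<or> card u = k + a'"
      "x i + x j = weight_vector k u"
      by blast
    have "u \<subseteq> H" using u(1) R(1) unfolding H by blast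
    then show ?thesis using col[OF _ u(2,3)] u(4) by simp
  qed
  moreover have "infinite (range x)" using \<open>inj x\<close> finite_imageD by blast
  ultimately show ?thesis by blast
qed

end

theorem theorem2:
  fixes k :: nat
    and c :: "('a \<Rightarrow>\<^sub>0 rat) \<Rightarrow> nat"
  assumes "beth_omega_sized (UNIV :: 'a set)"
    and "0 < k"
    and "\<forall>v. c v < k"
  shows "\<exists>X :: ('a \<Rightarrow>\<^sub>0 rat) set. infinite X \<and>
           (\<exists>col. \<forall>x\<in>X. \<forall>y\<in>X. c (x + y) = col)"
proof -
  obtain r :: "'a rel" where "Well_order r" "Field r = UNIV"
    using well_ordering[where 'a = 'a] by blast
  then interpret well_order_UNIV r by unfold_locales
  obtain S :: "nat \<Rightarrow> 'a set" where S: "beth_sequence S"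
    using assms(1) unfolding beth_omega_sized_def beth_sequence_def by blast
  have "|S (2 * k)| <o |UNIV :: 'a set|"
    using beth_sequence_ordLess_Suc[OF S] card_of_mono1[OF subset_UNIV] by (rule ordLess_ordLeq_trans)
  then obtain H where "has_order_type_omega_plus k H"
    and "size_determined (2 * k) (\<lambda>u. c (weight_vector k u)) H"
    using erdos_rado_size_determined[OF S] by blast
  then show ?thesis using monochromatic_sumset_if_size_determined assms(3) by blast
qed

end
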